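(* If $v_1$ and $v_2$ are symmetric submodular valuations on a finite set $X$, then $v_1\vee v_2$ is submodular (and symmetric).
   Context: A valuation on a finite set $X$ is a function $v:2^X\to\mathbb{R}_{\ge 0}$ with $v(\emptyset)=0$ and monotone under inclusion; it is symmetric if $v(S)$ depends only on $|S|$; it is submodular if $v(A)+v(B)\ge v(A\cup B)+v(A\cap B)$ for all $A,B\subseteq X$. $(v_1\vee v_2)(S)=\max_{T\subseteq S}(v_1(T)+v_2(S\setminus T))$. *)

theory Defs
  imports Complex_Main
begin

definition valuation :: "'a set \<Rightarrow> ('a set \<Rightarrow> real) \<Rightarrow> bool" where
  "valuation X v \<longleftrightarrow> v {} = 0 \<and> (\<forall>S\<subseteq>X. v S \<ge> 0)
     \<and> (\<forall>S T. S \<subseteq> T \<and> T \<subseteq> X \<longrightarrow> v S \<le> v T)"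

definition symmetric_val :: "'a set \<Rightarrow> ('a set \<Rightarrow> real) \<Rightarrow> bool" where
  "symmetric_val X v \<longleftrightarrow> (\<forall>S T. S \<subseteq> X \<and> T \<subseteq> X \<and> card S = card T \<longrightarrow> v S = v T)"

definition submodular :: "'a set \<Rightarrow> ('a set \<Rightarrow> real) \<Rightarrow> bool" where
  "submodular X v \<longleftrightarrow> (\<forall>A B. A \<subseteq> X \<and> B \<subseteq> X \<longrightarrow> v A + v B \<ge> v (A \<union> B) + v (A \<inter> B))"

definition val_join :: "('a set \<Rightarrow> real) \<Rightarrow> ('a set \<Rightarrow> real) \<Rightarrow> 'a set \<Rightarrow> real" where
  "val_join v1 v2 S = Max ((\<lambda>T. v1 T + v2 (S - T)) ` Pow S)"

end

theory Submission
  imports Defs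
begin

text \<open>A symmetric valuation is f \<circ> card for a profile f, and for such functions
  submodularity is exactly discrete concavity of f on 0, ..., card X. The join of two
  symmetric valuations with profiles f and g is symmetric with profile the max-plus
  convolution h m = max (k \<le> m) f k + g (m - k), and the max-plus convolution of concave
  sequences is concave: if the maxima for m and m + 2 are attained at k and j, the balanced
  splits (k + j) div 2 and (k + j) - (k + j) div 2 of m + 1 witness
  h m + h (m + 2) \<le> 2 h (m + 1) by concavity of f and g.\<close>

definition discrete_concave :: "nat \<Rightarrow> (nat \<Rightarrow> real) \<Rightarrow> bool" where
  "discrete_concave n F \<longleftrightarrow> (\<forall>k. k + 2 \<le> n \<longrightarrow> F k + F (k + 2) \<le> 2 * F (k + 1))"

definition max_conv :: "(nat \<Rightarrow> real) \<Rightarrow> (nat \<Rightarrow> real) \<Rightarrow> nat \<Rightarrow> real" where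
  "max_conv f g m = Max ((\<lambda>k. f k + g (m - k)) ` {..m})"

lemma discrete_concave_increments_antitone:
  assumes "discrete_concave n F" "i \<le> j" "j + 1 \<le> n"
  shows "F (j + 1) - F j \<le> F (i + 1) - F i"
  using assms(2,3)
proof (induction j)
  case 0
  then show ?case by simp
next
  case (Suc j)
  show ?case
  proof (cases "i = Suc j")
    case False
    then have "F (j + 1) - F j \<le> F (i + 1) - F i"
      using Suc by simp
    moreover have "F j + F (j + 2) \<le> 2 * F (j + 1)"
      using assms(1) Suc.prems unfolding discrete_concave_def by simp
    ultimately show ?thesis
      by (simp add: numeral_2_eq_2)
  qed simp
qed

lemma discrete_concave_spread_le:
  assumes "discrete_concave n F" "a \<le> c" "a \<le> d" "c + d = a + b" "b \<le> n"
  shows "F a + F b \<le> F c + F d"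
  using assms(2-5)
proof (induction "c - a" arbitrary: a b)
  case 0
  then have "c = a" "d = b"
    by simp_all
  then show ?case by simp
next
  case (Suc t a b)
  show ?case
  proof (cases "c = a \<or> d = a")
    case False
    then have inner: "a + 1 \<le> c" "a + 1 \<le> d" "a + 1 \<le> b - 1"
      using Suc.prems by auto
    have "F (a + 1) + F (b - 1) \<le> F c + F d"
      using Suc.hyps(1)[of "a + 1" "b - 1"] Suc.hyps(2) Suc.prems inner by simp
    moreover have "F (b - 1 + 1) - F (b - 1) \<le> F (a + 1) - F a"
      using discrete_concave_increments_antitone[OF assms(1), of a "b - 1"] inner Suc.prems
      by simp
    ultimately show ?thesis
      using inner by simp
  qed (use Suc.prems in auto)
qed

lemma discrete_concave_balanced_le:
  assumes "discrete_concave n F" "a \<le> n" "b \<le> n" "p + q = a + b" "p \<le> q" "q \<le> p + 1"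
  shows "F a + F b \<le> F p + F q"
proof -
  have "F (min a b) + F (max a b) \<le> F p + F q"
    by (rule discrete_concave_spread_le[OF assms(1)]) (use assms(2-6) in auto)
  then show ?thesis
    by (cases "a \<le> b") (simp_all add: min_def max_def add.commute)
qed

lemma max_conv_ge: "k \<le> m \<Longrightarrow> f k + g (m - k) \<le> max_conv f g m"
  unfolding max_conv_def by (intro Max_ge) auto

lemma max_conv_attained:
  obtains k where "k \<le> m" "max_conv f g m = f k + g (m - k)"
proof -
  have "max_conv f g m \<in> (\<lambda>k. f k + g (m - k)) ` {..m}"
    unfolding max_conv_def by (intro Max_in) auto
  then show ?thesis
    using that by auto
qed

lemma discrete_concave_max_conv:
  assumes f: "discrete_concave n f" and g: "discrete_concave n g"
  shows "discrete_concave n (max_conv f g)"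
  unfolding discrete_concave_def
proof (intro allI impI)
  fix m
  assume m: "m + 2 \<le> n"
  obtain k where k: "k \<le> m" "max_conv f g m = f k + g (m - k)"
    using max_conv_attained .
  obtain j where j: "j \<le> m + 2" "max_conv f g (m + 2) = f j + g (m + 2 - j)"
    using max_conv_attained .
  define k1 where "k1 = (k + j) div 2"
  define k2 where "k2 = k + j - k1"
  have k12: "k1 + k2 = k + j" "k1 \<le> k2" "k2 \<le> k1 + 1" "k2 \<le> m + 1"
    unfolding k1_def k2_def using k j by auto
  have "f k + f j \<le> f k1 + f k2"
    using discrete_concave_balanced_le[OF f] k12 k j m by simp
  moreover have "g (m - k) + g (m + 2 - j) \<le> g (m + 1 - k2) + g (m + 1 - k1)"
    using discrete_concave_balanced_le[OF g] k12 k j m by simp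
  moreover have "f k1 + g (m + 1 - k1) \<le> max_conv f g (m + 1)"
    and "f k2 + g (m + 1 - k2) \<le> max_conv f g (m + 1)"
    using max_conv_ge k12 by auto
  ultimately show "max_conv f g m + max_conv f g (m + 2) \<le> 2 * max_conv f g (m + 1)"
    using k j by simp
qed

lemma submodularD:
  "submodular X v \<Longrightarrow> A \<subseteq> X \<Longrightarrow> B \<subseteq> X \<Longrightarrow> v (A \<union> B) + v (A \<inter> B) \<le> v A + v B"
  unfolding submodular_def by blast

lemma symmetric_val_iff_card_profile:
  "symmetric_val X v \<longleftrightarrow> (\<exists>f. \<forall>S\<subseteq>X. v S = f (card S))"
proof
  assume sym: "symmetric_val X v"
  define f where "f k = v (SOME T. T \<subseteq> X \<and> card T = k)" for k
  have "v S = f (card S)" if S: "S \<subseteq> X" for S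
  proof -
    have "\<exists>T. T \<subseteq> X \<and> card T = card S"
      using S by blast
    then have "(SOME T. T \<subseteq> X \<and> card T = card S) \<subseteq> X \<and>
        card (SOME T. T \<subseteq> X \<and> card T = card S) = card S"
      by (rule someI_ex)
    then show ?thesis
      using sym S unfolding symmetric_val_def f_def by metis
  qed
  then show "\<exists>f. \<forall>S\<subseteq>X. v S = f (card S)"
    by blast
next
  assume "\<exists>f. \<forall>S\<subseteq>X. v S = f (card S)"
  then obtain f where "\<forall>S\<subseteq>X. v S = f (card S)"
    by blast
  then show "symmetric_val X v"
    unfolding symmetric_val_def by simp
qed

lemma submodular_card_profile_iff:
  assumes X: "finite X" and v: "\<And>S. S \<subseteq> X \<Longrightarrow> v S = f (card S)"
  shows "submodular X v \<longleftrightarrow> discrete_concave (card X) f"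
proof
  assume sub: "submodular X v"
  show "discrete_concave (card X) f"
    unfolding discrete_concave_def
  proof (intro allI impI)
    fix k
    assume "k + 2 \<le> card X"
    then obtain S where S: "S \<subseteq> X" "card S = k + 2" "finite S"
      by (rule obtain_subset_with_card_n)
    then obtain T where "T \<subseteq> S" "card T = 2"
      by (metis obtain_subset_with_card_n le_add2)
    then obtain a b where ab: "a \<in> S" "b \<in> S" "a \<noteq> b"
      by (auto simp: card_2_iff)
    have sub_X: "S - {a} \<subseteq> X" "S - {b} \<subseteq> X" "S - {a, b} \<subseteq> X"
      using S by auto
    have "(S - {a}) \<union> (S - {b}) = S" "(S - {a}) \<inter> (S - {b}) = S - {a, b}"
      using ab by auto
    then have "v S + v (S - {a, b}) \<le> v (S - {a}) + v (S - {b})"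
      using submodularD[OF sub sub_X(1,2)] by simp
    moreover have "card (S - {a}) = k + 1" "card (S - {b}) = k + 1" "card (S - {a, b}) = k"
      using S ab by (simp_all add: card_Diff_subset)
    ultimately show "f k + f (k + 2) \<le> 2 * f (k + 1)"
      using v[OF S(1)] v[OF sub_X(1)] v[OF sub_X(2)] v[OF sub_X(3)] S(2) by simp
  qed
next
  assume conc: "discrete_concave (card X) f"
  show "submodular X v"
    unfolding submodular_def
  proof (intro allI impI)
    fix A B
    assume AB: "A \<subseteq> X \<and> B \<subseteq> X"
    then have fin: "finite A" "finite B"
      using X finite_subset by auto
    have "f (card (A \<inter> B)) + f (card (A \<union> B)) \<le> f (card A) + f (card B)"
    proof (rule discrete_concave_spread_le[OF conc])
      show "card (A \<inter> B) \<le> card A" "card (A \<inter> B) \<le> card B"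
        using fin by (simp_all add: card_mono)
      show "card A + card B = card (A \<inter> B) + card (A \<union> B)"
        using card_Un_Int[OF fin] by simp
      show "card (A \<union> B) \<le> card X"
        using AB X by (simp add: card_mono)
    qed
    moreover have "A \<union> B \<subseteq> X" "A \<inter> B \<subseteq> X"
      using AB by auto
    ultimately show "v (A \<union> B) + v (A \<inter> B) \<le> v A + v B"
      using v AB by simp
  qed
qed

lemma card_image_Pow: "finite S \<Longrightarrow> card ` Pow S = {..card S}"
  by (auto simp: card_mono elim: obtain_subset_with_card_n)

lemma val_join_card_profile:
  assumes v1: "\<And>S. S \<subseteq> X \<Longrightarrow> v1 S = f (card S)"
    and v2: "\<And>S. S \<subseteq> X \<Longrightarrow> v2 S = g (card S)"
    and S: "S \<subseteq> X" "finite S"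
  shows "val_join v1 v2 S = max_conv f g (card S)"
proof -
  have "v1 T + v2 (S - T) = f (card T) + g (card S - card T)" if T: "T \<subseteq> S" for T
  proof -
    have "card (S - T) = card S - card T"
      using T S(2) by (simp add: card_Diff_subset rev_finite_subset)
    moreover have "T \<subseteq> X" "S - T \<subseteq> X"
      using T S(1) by auto
    ultimately show ?thesis
      using v1 v2 by simp
  qed
  then have "(\<lambda>T. v1 T + v2 (S - T)) ` Pow S = (\<lambda>T. f (card T) + g (card S - card T)) ` Pow S"
    by (intro image_cong) simp_all
  also have "\<dots> = (\<lambda>k. f k + g (card S - k)) ` card ` Pow S"
    by (simp add: image_image)
  also have "\<dots> = (\<lambda>k. f k + g (card S - k)) ` {..card S}"
    by (simp add: card_image_Pow S(2))
  finally show ?thesis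
    unfolding val_join_def max_conv_def by simp
qed

theorem proposition3:
  fixes X :: "'a set" and v1 v2 :: "'a set \<Rightarrow> real"
  assumes "finite X"
    and "valuation X v1" and "symmetric_val X v1" and "submodular X v1"
    and "valuation X v2" and "symmetric_val X v2" and "submodular X v2"
  shows "submodular X (val_join v1 v2) \<and> symmetric_val X (val_join v1 v2)"
proof -
  obtain f where f: "\<And>S. S \<subseteq> X \<Longrightarrow> v1 S = f (card S)"
    using \<open>symmetric_val X v1\<close> symmetric_val_iff_card_profile by metis
  obtain g where g: "\<And>S. S \<subseteq> X \<Longrightarrow> v2 S = g (card S)"
    using \<open>symmetric_val X v2\<close> symmetric_val_iff_card_profile by metis
  have join: "val_join v1 v2 S = max_conv f g (card S)" if "S \<subseteq> X" for S
    using val_join_card_profile[of X v1 f v2 g S] f g that \<open>finite X\<close> finite_subset by blast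
  have "discrete_concave (card X) f" "discrete_concave (card X) g"
    using submodular_card_profile_iff[OF \<open>finite X\<close>] f g
      \<open>submodular X v1\<close> \<open>submodular X v2\<close> by blast+
  then have "discrete_concave (card X) (max_conv f g)"
    by (rule discrete_concave_max_conv)
  then have "submodular X (val_join v1 v2)"
    using submodular_card_profile_iff[of X "val_join v1 v2" "max_conv f g"] \<open>finite X\<close> join
    by blast
  moreover have "symmetric_val X (val_join v1 v2)"
    using symmetric_val_iff_card_profile join by blast
  ultimately show ?thesis ..
qed

end
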